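(* Consider MDVI$(\alpha,K,M)$ with any $\alpha\in[0,1)$ and any positive integers $K,M$, on an MDP as in the context. Then, for every realization of the samples and every $k\in\{1,\dots,K\}$, $$0 \leq v^* - v^{\pi'_k} \leq \Gamma_k,\qquad \Gamma_k := \frac{1}{A_\infty}\sum_{j=0}^{k-1}\gamma^j\left(\pi_k P_{k-j}^{k-1} - \pi_* P_*^j\right)E_{k-j} + 2H\left(\alpha^k + \frac{A_{\gamma,k}}{A_\infty}\right)\mathbf{1},$$ where inequalities between vectors are componentwise.
   Context: MDP: finite state set $\mathcal{X}$, finite action set $\mathcal{A}$, discount $\gamma\in[0,1)$, reward $r \in [-1,1]^{\mathcal{X}\times\mathcal{A}}$, transition kernel $P(y|x,a)$, $H=1/(1-\gamma)$. $P$ is viewed as a matrix in $\mathbb{R}^{(\mathcal{X}\times\mathcal{A})\times\mathcal{X}}$, $(Pv)(x,a)=\sum_yP(y|x,a)v(y)$; a policy $\pi$ is viewed as a matrix in $\mathbb{R}^{\mathcal{X}\times(\mathcal{X}\times\mathcal{A})}$, $(\pi q)(x)=\sum_a\pi(a|x)q(x,a)$; $P^\pi := P\pi$; $T^\pi q = r+\gamma P^\pi q$; $q^\pi$ its fixed point, $v^\pi=\pi q^\pi$; $\pi_*$ is an optimal policy, $v^*=v^{\pi_*}$. $\mathbf{1}$ is the all-ones vector. MDVI$(\alpha,K,M)$: $s_0 = 0$, $w_0=w_{-1}=0$; for $k=0,\dots,K-1$: $v_k = w_k-\alpha w_{k-1}$; for each $(x,a)$, independent samples $y_{k,m,x,a}\sim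 P(\cdot|x,a)$, $m\in[M]$; $q_{k+1}(x,a) = r(x,a)+\frac{\gamma}{M}\sum_m v_k(y_{k,m,x,a})$; $s_{k+1}=q_{k+1}+\alpha s_k$; $w_{k+1}(x)=\max_a s_{k+1}(x,a)$. $\pi_k$ ($k=0,\dots,K$) is a deterministic greedy policy w.r.t. $s_k$. Notation: $\widehat P_k v(x,a) = \frac1M\sum_m v(y_{k,m,x,a})$; $\varepsilon_k = \gamma\widehat P_{k-1}v_{k-1} - \gamma P v_{k-1}$ for $k\in[K]$; $E_k = \sum_{j=1}^k \alpha^{k-j}\varepsilon_j$. $A_\infty = 1/(1-\alpha)$, $A_{\gamma,k} = \sum_{j=0}^{k-1}\gamma^{k-j}\alpha^j$. For $i\ge j$, $P_j^i := P^{\pi_i}P^{\pi_{i-1}}\cdots P^{\pi_j}$, and $P_j^i := I$ if $i<j$; $P_*^j := (P^{\pi_*})^j$. $\pi'_k$ is the non-stationary policy following $\pi_{k-t}$ at time step $t\le k$ and $\pi_0$ afterwards, with value $v^{\pi'_k} = \pi_kT^{\pi_{k-1}}\cdots T^{\pi_1}q^{\pi_0}$. *)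

theory Defs
  imports Main "HOL-Analysis.Analysis"
begin

text \<open>Transition kernel: P x a y = P(y|x,a). Stochastic policies: pol x a = pol(a|x).\<close>

definition stoch_kernel :: "('x::finite \<Rightarrow> 'a::finite \<Rightarrow> 'x \<Rightarrow> real) \<Rightarrow> bool" where
  "stoch_kernel P \<longleftrightarrow> (\<forall>x a y. 0 \<le> P x a y) \<and> (\<forall>x a. (\<Sum>y\<in>UNIV. P x a y) = 1)"

definition stoch_policy :: "('x::finite \<Rightarrow> 'a::finite \<Rightarrow> real) \<Rightarrow> bool" where
  "stoch_policy \<pi> \<longleftrightarrow> (\<forall>x a. 0 \<le> \<pi> x a) \<and> (\<forall>x. (\<Sum>a\<in>UNIV. \<pi> x a) = 1)"

definition det_pol :: "('x \<Rightarrow> 'a) \<Rightarrow> 'x \<Rightarrow> 'a \<Rightarrow> real" where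
  "det_pol d x a = (if a = d x then 1 else 0)"

definition pol_app :: "('x \<Rightarrow> 'a::finite \<Rightarrow> real) \<Rightarrow> ('x \<Rightarrow> 'a \<Rightarrow> real) \<Rightarrow> 'x \<Rightarrow> real" where
  "pol_app \<pi> q x = (\<Sum>a\<in>UNIV. \<pi> x a * q x a)"

definition kern_app :: "('x \<Rightarrow> 'a \<Rightarrow> 'x::finite \<Rightarrow> real) \<Rightarrow> ('x \<Rightarrow> real) \<Rightarrow> 'x \<Rightarrow> 'a \<Rightarrow> real" where
  "kern_app P v x a = (\<Sum>y\<in>UNIV. P x a y * v y)"

definition Ppol :: "('x \<Rightarrow> 'a \<Rightarrow> 'x::finite \<Rightarrow> real) \<Rightarrow> ('x \<Rightarrow> 'a::finite \<Rightarrow> real)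
    \<Rightarrow> ('x \<Rightarrow> 'a \<Rightarrow> real) \<Rightarrow> 'x \<Rightarrow> 'a \<Rightarrow> real" where
  "Ppol P \<pi> q = kern_app P (pol_app \<pi> q)"

definition Tpol :: "real \<Rightarrow> ('x \<Rightarrow> 'a \<Rightarrow> real) \<Rightarrow> ('x \<Rightarrow> 'a \<Rightarrow> 'x::finite \<Rightarrow> real)
    \<Rightarrow> ('x \<Rightarrow> 'a::finite \<Rightarrow> real) \<Rightarrow> ('x \<Rightarrow> 'a \<Rightarrow> real) \<Rightarrow> 'x \<Rightarrow> 'a \<Rightarrow> real" where
  "Tpol \<gamma> r P \<pi> q x a = r x a + \<gamma> * Ppol P \<pi> q x a"

definition qpi :: "real \<Rightarrow> ('x \<Rightarrow> 'a \<Rightarrow> real) \<Rightarrow> ('x \<Rightarrow> 'a \<Rightarrow> 'x::finite \<Rightarrow> real)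
    \<Rightarrow> ('x \<Rightarrow> 'a::finite \<Rightarrow> real) \<Rightarrow> 'x \<Rightarrow> 'a \<Rightarrow> real" where
  "qpi \<gamma> r P \<pi> = (THE q. Tpol \<gamma> r P \<pi> q = q)"

definition vpi :: "real \<Rightarrow> ('x \<Rightarrow> 'a \<Rightarrow> real) \<Rightarrow> ('x \<Rightarrow> 'a \<Rightarrow> 'x::finite \<Rightarrow> real)
    \<Rightarrow> ('x \<Rightarrow> 'a::finite \<Rightarrow> real) \<Rightarrow> 'x \<Rightarrow> real" where
  "vpi \<gamma> r P \<pi> = pol_app \<pi> (qpi \<gamma> r P \<pi>)"

definition optimal_policy :: "real \<Rightarrow> ('x \<Rightarrow> 'a \<Rightarrow> real) \<Rightarrow> ('x \<Rightarrow> 'a \<Rightarrow> 'x::finite \<Rightarrow> real)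
    \<Rightarrow> ('x \<Rightarrow> 'a::finite \<Rightarrow> real) \<Rightarrow> bool" where
  "optimal_policy \<gamma> r P \<pi>s \<longleftrightarrow> stoch_policy \<pi>s \<and>
     (\<forall>\<pi>. stoch_policy \<pi> \<longrightarrow> (\<forall>x. vpi \<gamma> r P \<pi> x \<le> vpi \<gamma> r P \<pi>s x))"

text \<open>MDVI iteration. Samples: y k m x a = y_{k,m,x,a}, m ranges over {0..<M}.
  mdvi_state k = (s_k, w_k, w_{k-1}) with w_{-1} = 0.\<close>
primrec mdvi_state :: "real \<Rightarrow> nat \<Rightarrow> real \<Rightarrow> ('x \<Rightarrow> 'a \<Rightarrow> real)
    \<Rightarrow> (nat \<Rightarrow> nat \<Rightarrow> 'x \<Rightarrow> 'a \<Rightarrow> 'x) \<Rightarrow> nat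
    \<Rightarrow> ('x \<Rightarrow> 'a::finite \<Rightarrow> real) \<times> ('x \<Rightarrow> real) \<times> ('x \<Rightarrow> real)" where
  "mdvi_state \<alpha> M \<gamma> r y 0 = ((\<lambda>x a. 0), (\<lambda>x. 0), (\<lambda>x. 0))"
| "mdvi_state \<alpha> M \<gamma> r y (Suc k) =
     (case mdvi_state \<alpha> M \<gamma> r y k of (s, w, wp) \<Rightarrow>
        let v = (\<lambda>x. w x - \<alpha> * wp x);
            q = (\<lambda>x a. r x a + \<gamma> / real M * (\<Sum>m<M. v (y k m x a)));
            s' = (\<lambda>x a. q x a + \<alpha> * s x a);
            w' = (\<lambda>x. Max (range (s' x)))
        in (s', w', w))"

definition mdvi_s where "mdvi_s \<alpha> M \<gamma> r y k = fst (mdvi_state \<alpha> M \<gamma> r y k)"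

definition mdvi_v where
  "mdvi_v \<alpha> M \<gamma> r y k = (\<lambda>x. fst (snd (mdvi_state \<alpha> M \<gamma> r y k)) x
                              - \<alpha> * snd (snd (mdvi_state \<alpha> M \<gamma> r y k)) x)"

definition Phat :: "nat \<Rightarrow> (nat \<Rightarrow> nat \<Rightarrow> 'x \<Rightarrow> 'a \<Rightarrow> 'x) \<Rightarrow> nat \<Rightarrow> ('x \<Rightarrow> real) \<Rightarrow> 'x \<Rightarrow> 'a \<Rightarrow> real" where
  "Phat M y k v x a = (\<Sum>m<M. v (y k m x a)) / real M"

text \<open>\<epsilon>_k = \<gamma> \<widehat>P_{k-1} v_{k-1} - \<gamma> P v_{k-1} (used for k \<ge> 1)\<close>
definition mdvi_eps where
  "mdvi_eps \<alpha> M \<gamma> r P y k = (\<lambda>x a.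
      \<gamma> * Phat M y (k - 1) (mdvi_v \<alpha> M \<gamma> r y (k - 1)) x a
    - \<gamma> * kern_app P (mdvi_v \<alpha> M \<gamma> r y (k - 1)) x a)"

definition mdvi_E where
  "mdvi_E \<alpha> M \<gamma> r P y k = (\<lambda>x a. \<Sum>j\<in>{1..k}. \<alpha> ^ (k - j) * mdvi_eps \<alpha> M \<gamma> r P y j x a)"

text \<open>Pchain P pol j n = P^{\<pi>_{j+n-1}} \<dots> P^{\<pi>_j} (n factors). Thus P_j^i = Pchain P pol j (i + 1 - j),
  which is the identity when i < j.\<close>
primrec Pchain :: "('x \<Rightarrow> 'a \<Rightarrow> 'x::finite \<Rightarrow> real) \<Rightarrow> (nat \<Rightarrow> 'x \<Rightarrow> 'a::finite) \<Rightarrow> nat \<Rightarrow> nat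
    \<Rightarrow> ('x \<Rightarrow> 'a \<Rightarrow> real) \<Rightarrow> 'x \<Rightarrow> 'a \<Rightarrow> real" where
  "Pchain P pol j 0 q = q"
| "Pchain P pol j (Suc n) q = Ppol P (det_pol (pol (j + n))) (Pchain P pol j n q)"

definition Pji where "Pji P pol j i = Pchain P pol j (i + 1 - j)"

definition Pstar_pow where "Pstar_pow P \<pi>s j = (Ppol P \<pi>s ^^ j)"

primrec Tchain :: "real \<Rightarrow> ('x \<Rightarrow> 'a \<Rightarrow> real) \<Rightarrow> ('x \<Rightarrow> 'a \<Rightarrow> 'x::finite \<Rightarrow> real)
    \<Rightarrow> (nat \<Rightarrow> 'x \<Rightarrow> 'a::finite) \<Rightarrow> nat \<Rightarrow> ('x \<Rightarrow> 'a \<Rightarrow> real) \<Rightarrow> 'x \<Rightarrow> 'a \<Rightarrow> real" where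
  "Tchain \<gamma> r P pol 0 q = q"
| "Tchain \<gamma> r P pol (Suc n) q = Tpol \<gamma> r P (det_pol (pol (Suc n))) (Tchain \<gamma> r P pol n q)"

text \<open>v^{\<pi>'_k} = \<pi>_k T^{\<pi>_{k-1}} \<dots> T^{\<pi>_1} q^{\<pi>_0}  (k \<ge> 1)\<close>
definition v_nonstat where
  "v_nonstat \<gamma> r P pol k =
     pol_app (det_pol (pol k)) (Tchain \<gamma> r P pol (k - 1) (qpi \<gamma> r P (det_pol (pol 0))))"

definition A_inf :: "real \<Rightarrow> real" where "A_inf \<alpha> = 1 / (1 - \<alpha>)"

definition A_gamma :: "real \<Rightarrow> real \<Rightarrow> nat \<Rightarrow> real" where
  "A_gamma \<gamma> \<alpha> k = (\<Sum>j<k. \<gamma> ^ (k - j) * \<alpha> ^ j)"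

definition Hor :: "real \<Rightarrow> real" where "Hor \<gamma> = 1 / (1 - \<gamma>)"

definition Gamma_bound where
  "Gamma_bound \<alpha> M \<gamma> r P y pol \<pi>s k = (\<lambda>x.
     (1 / A_inf \<alpha>) * (\<Sum>j<k. \<gamma> ^ j *
        ( pol_app (det_pol (pol k)) (Pji P pol (k - j) (k - 1) (mdvi_E \<alpha> M \<gamma> r P y (k - j))) x
        - pol_app \<pi>s (Pstar_pow P \<pi>s j (mdvi_E \<alpha> M \<gamma> r P y (k - j))) x))
     + 2 * Hor \<gamma> * (\<alpha> ^ k + A_gamma \<gamma> \<alpha> k / A_inf \<alpha>))"

end

theory Submission
  imports Defs
begin

text \<open>
  Unrolling the recursion gives s_k = A_k r + \<gamma> P w_{k-1} + E_k with A_k = \<Sum>_{j<k} \<alpha>^j,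
  so s_k can be compared with A_k times a q-function one step at a time. Since w_{k-1}
  dominates \<pi>_* s_{k-1}, the gap A_k q^{\<pi>_*} - s_k is at most \<gamma> P^{\<pi>_*} applied to the
  previous gap, plus \<gamma> \<alpha>^{k-1} H - E_k. Since w_{k-1} = \<pi>_{k-1} s_{k-1}, the gap s_k - A_k Q_k
  to the q-values Q_k = T^{\<pi>_{k-1}} ... T^{\<pi>_0} q^{\<pi>_0} of the non-stationary policy obeys the
  same recursion along P^{\<pi>_{k-1}}. Averaging the first gap over \<pi>_*, evaluating the second at
  the greedy action \<pi>_k(x) and using \<pi>_* s_k \<le> w_k = s_k(x, \<pi>_k(x)) bounds
  A_k (v^* - v^{\<pi>'_k}) by 2 A_{\<gamma>,k} H plus the error terms; the theorem follows from
  1 = \<alpha>^k + (1 - \<alpha>) A_k and \<bar>v^* - v^{\<pi>'_k}\<bar> \<le> 2 H. For the lower bound, every Q_k stays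
  below q^{\<pi>_*}, which stays below v^*.
\<close>

section \<open>Policy and transition operators\<close>

lemma pol_app_add: "pol_app \<pi> (\<lambda>x a. f x a + g x a) x = pol_app \<pi> f x + pol_app \<pi> g x"
  by (simp add: pol_app_def distrib_left sum.distrib)

lemma pol_app_diff: "pol_app \<pi> (\<lambda>x a. f x a - g x a) x = pol_app \<pi> f x - pol_app \<pi> g x"
  by (simp add: pol_app_def right_diff_distrib sum_subtractf)

lemma pol_app_mult: "pol_app \<pi> (\<lambda>x a. c * f x a) x = c * pol_app \<pi> f x"
  by (simp add: pol_app_def sum_distrib_left algebra_simps)

lemma pol_app_sum: "pol_app \<pi> (\<lambda>x a. \<Sum>j\<in>S. f j x a) x = (\<Sum>j\<in>S. pol_app \<pi> (f j) x)"
  by (simp add: pol_app_def sum_distrib_left sum.swap[of _ S])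

lemma pol_app_const: "stoch_policy \<pi> \<Longrightarrow> pol_app \<pi> (\<lambda>x a. c) x = c"
  by (simp add: pol_app_def stoch_policy_def flip: sum_distrib_right)

lemma pol_app_mono:
  "stoch_policy \<pi> \<Longrightarrow> (\<And>a. f x a \<le> g x a) \<Longrightarrow> pol_app \<pi> f x \<le> pol_app \<pi> g x"
  unfolding pol_app_def stoch_policy_def by (intro sum_mono mult_left_mono) auto

lemma pol_app_le: "stoch_policy \<pi> \<Longrightarrow> (\<And>a. f x a \<le> c) \<Longrightarrow> pol_app \<pi> f x \<le> c"
  using pol_app_mono[of \<pi> f x "\<lambda>x a. c"] by (simp add: pol_app_const)

lemma abs_pol_app_le:
  assumes \<pi>: "stoch_policy \<pi>" and f: "\<And>a. \<bar>f x a\<bar> \<le> c"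
  shows "\<bar>pol_app \<pi> f x\<bar> \<le> c"
proof -
  have "pol_app \<pi> f x \<le> pol_app \<pi> (\<lambda>x a. c) x"
    by (rule pol_app_mono[OF \<pi>]) (metis f abs_le_D1)
  moreover have "pol_app \<pi> (\<lambda>x a. - c) x \<le> pol_app \<pi> f x"
    by (rule pol_app_mono[OF \<pi>]) (metis f abs_le_D2 minus_le_iff)
  ultimately show ?thesis by (simp add: pol_app_const[OF \<pi>])
qed

lemma stoch_policy_det_pol: "stoch_policy (det_pol (d :: 'x::finite \<Rightarrow> 'a::finite))"
  unfolding stoch_policy_def det_pol_def by simp

lemma pol_app_det_pol: "pol_app (det_pol d) q x = q x (d x)"
  by (simp add: pol_app_def det_pol_def if_distrib[of "\<lambda>c. c * _"] cong: if_cong)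

lemma kern_app_add: "kern_app P (\<lambda>x. f x + g x) x a = kern_app P f x a + kern_app P g x a"
  by (simp add: kern_app_def distrib_left sum.distrib)

lemma kern_app_diff: "kern_app P (\<lambda>x. f x - g x) x a = kern_app P f x a - kern_app P g x a"
  by (simp add: kern_app_def right_diff_distrib sum_subtractf)

lemma kern_app_mult: "kern_app P (\<lambda>x. c * f x) x a = c * kern_app P f x a"
  by (simp add: kern_app_def sum_distrib_left algebra_simps)

lemma kern_app_sum: "kern_app P (\<lambda>x. \<Sum>j\<in>S. f j x) x a = (\<Sum>j\<in>S. kern_app P (f j) x a)"
  by (simp add: kern_app_def sum_distrib_left sum.swap[of _ S])

lemma kern_app_const: "stoch_kernel P \<Longrightarrow> kern_app P (\<lambda>x. c) x a = c"
  by (simp add: kern_app_def stoch_kernel_def flip: sum_distrib_right)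

lemma kern_app_mono:
  "stoch_kernel P \<Longrightarrow> (\<And>y. f y \<le> g y) \<Longrightarrow> kern_app P f x a \<le> kern_app P g x a"
  unfolding kern_app_def stoch_kernel_def by (intro sum_mono mult_left_mono) auto

lemma abs_kern_app_le:
  assumes P: "stoch_kernel P" and f: "\<And>y. \<bar>f y\<bar> \<le> c"
  shows "\<bar>kern_app P f x a\<bar> \<le> c"
proof -
  have "kern_app P f x a \<le> kern_app P (\<lambda>y. c) x a"
    by (rule kern_app_mono[OF P]) (metis f abs_le_D1)
  moreover have "kern_app P (\<lambda>y. - c) x a \<le> kern_app P f x a"
    by (rule kern_app_mono[OF P]) (metis f abs_le_D2 minus_le_iff)
  ultimately show ?thesis by (simp add: kern_app_const[OF P])
qed

lemma Ppol_add: "Ppol P \<pi> (\<lambda>x a. f x a + g x a) x a = Ppol P \<pi> f x a + Ppol P \<pi> g x a"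
  by (simp add: Ppol_def pol_app_add[abs_def] kern_app_add)

lemma Ppol_diff: "Ppol P \<pi> (\<lambda>x a. f x a - g x a) x a = Ppol P \<pi> f x a - Ppol P \<pi> g x a"
  by (simp add: Ppol_def pol_app_diff[abs_def] kern_app_diff)

lemma Ppol_mult: "Ppol P \<pi> (\<lambda>x a. c * f x a) x a = c * Ppol P \<pi> f x a"
  by (simp add: Ppol_def pol_app_mult[abs_def] kern_app_mult)

lemma Ppol_sum: "Ppol P \<pi> (\<lambda>x a. \<Sum>j\<in>S. f j x a) x a = (\<Sum>j\<in>S. Ppol P \<pi> (f j) x a)"
  by (simp add: Ppol_def pol_app_sum[abs_def] kern_app_sum)

lemma Ppol_const:
  assumes "stoch_kernel P" and "stoch_policy \<pi>"
  shows "Ppol P \<pi> (\<lambda>x a. c) x a = c"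
proof -
  have "pol_app \<pi> (\<lambda>x a. c) = (\<lambda>x. c)" using assms(2) by (simp add: pol_app_const fun_eq_iff)
  thus ?thesis by (simp add: Ppol_def kern_app_const[OF assms(1)])
qed

lemma Ppol_mono:
  "stoch_kernel P \<Longrightarrow> stoch_policy \<pi> \<Longrightarrow> (\<And>x a. f x a \<le> g x a) \<Longrightarrow> Ppol P \<pi> f x a \<le> Ppol P \<pi> g x a"
  unfolding Ppol_def by (intro kern_app_mono pol_app_mono) auto

lemma abs_Ppol_le:
  "stoch_kernel P \<Longrightarrow> stoch_policy \<pi> \<Longrightarrow> (\<And>x a. \<bar>f x a\<bar> \<le> c) \<Longrightarrow> \<bar>Ppol P \<pi> f x a\<bar> \<le> c"
  unfolding Ppol_def by (intro abs_kern_app_le abs_pol_app_le) auto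

section \<open>Policy evaluation\<close>

text \<open>A maximum principle: at a minimiser of d, \<gamma> min d \<le> \<gamma> P^\<pi> d \<le> min d.\<close>

lemma nonneg_if_discounted_Ppol_le:
  fixes d :: "'x::finite \<Rightarrow> 'a::finite \<Rightarrow> real"
  assumes P: "stoch_kernel P" and \<pi>: "stoch_policy \<pi>" and \<gamma>: "0 \<le> \<gamma>" "\<gamma> < 1"
    and le: "\<And>x a. \<gamma> * Ppol P \<pi> d x a \<le> d x a"
  shows "0 \<le> d x a"
proof -
  obtain x0 a0 where min: "\<And>x a. d x0 a0 \<le> d x a"
    using ex_is_arg_min_if_finite[of UNIV "\<lambda>p. d (fst p) (snd p)"]
    by (auto simp: is_arg_min_linorder)
  have "d x0 a0 \<le> Ppol P \<pi> d x0 a0"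
    using Ppol_mono[OF P \<pi>, of "\<lambda>x a. d x0 a0" d] min by (simp add: Ppol_const[OF P \<pi>])
  hence "\<gamma> * d x0 a0 \<le> d x0 a0"
    using le[of x0 a0] \<gamma>(1) by (meson mult_left_mono order_trans)
  hence "0 \<le> (1 - \<gamma>) * d x0 a0" by (simp add: algebra_simps)
  hence "0 \<le> d x0 a0" using \<gamma>(2) by (simp add: zero_le_mult_iff)
  thus ?thesis using min[of x a] by simp
qed

lemma Tpol_comparison:
  fixes q q' :: "'x::finite \<Rightarrow> 'a::finite \<Rightarrow> real"
  assumes P: "stoch_kernel P" and \<pi>: "stoch_policy \<pi>" and \<gamma>: "0 \<le> \<gamma>" "\<gamma> < 1"
    and sub: "\<And>x a. q x a \<le> Tpol \<gamma> r P \<pi> q x a"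
    and super: "\<And>x a. Tpol \<gamma> r P \<pi> q' x a \<le> q' x a"
  shows "q x a \<le> q' x a"
proof -
  have "\<gamma> * Ppol P \<pi> (\<lambda>x a. q' x a - q x a) x a \<le> q' x a - q x a" for x a
    using sub[of x a] super[of x a] by (simp add: Tpol_def Ppol_diff algebra_simps)
  from nonneg_if_discounted_Ppol_le[OF P \<pi> \<gamma> this] show ?thesis by simp
qed

text \<open>I - \<gamma> P^\<pi> is injective by the maximum principle, hence surjective on the
  finite-dimensional space of q-functions.\<close>

lemma Tpol_has_fixed_point:
  fixes P :: "'x::finite \<Rightarrow> 'a::finite \<Rightarrow> 'x \<Rightarrow> real"
  assumes P: "stoch_kernel P" and \<pi>: "stoch_policy \<pi>" and \<gamma>: "0 \<le> \<gamma>" "\<gamma> < 1"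
  shows "\<exists>q. Tpol \<gamma> r P \<pi> q = q"
proof -
  define L where "L = (\<lambda>v::real^('x \<times> 'a).
    \<chi> p. v$p - \<gamma> * Ppol P \<pi> (\<lambda>x a. v$(x, a)) (fst p) (snd p))"
  have "linear L"
    by (rule linearI) (simp_all add: L_def vec_eq_iff Ppol_add Ppol_mult algebra_simps)
  moreover have "inj L"
  proof -
    have "v$(x, a) \<le> u$(x, a)" if "L u = L v" for u v x a
    proof -
      have "\<gamma> * Ppol P \<pi> (\<lambda>x a. u$(x, a) - v$(x, a)) x a = u$(x, a) - v$(x, a)" for x a
        using arg_cong[OF that, of "\<lambda>w. w$(x, a)"] by (simp add: L_def Ppol_diff algebra_simps)
      with nonneg_if_discounted_Ppol_le[OF P \<pi> \<gamma>, of "\<lambda>x a. u$(x, a) - v$(x, a)"]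
      show ?thesis by simp
    qed
    thus ?thesis by (metis injI vec_eq_iff antisym surj_pair)
  qed
  ultimately obtain v where v: "L v = (\<chi> p. r (fst p) (snd p))"
    by (metis linear_injective_imp_surjective surjD)
  have "Tpol \<gamma> r P \<pi> (\<lambda>x a. v$(x, a)) x a = v$(x, a)" for x a
    using arg_cong[OF v, of "\<lambda>u. u$(x, a)"] by (simp add: L_def Tpol_def)
  thus ?thesis by blast
qed

lemma Tpol_qpi:
  fixes P :: "'x::finite \<Rightarrow> 'a::finite \<Rightarrow> 'x \<Rightarrow> real"
  assumes P: "stoch_kernel P" and \<pi>: "stoch_policy \<pi>" and \<gamma>: "0 \<le> \<gamma>" "\<gamma> < 1"
  shows "Tpol \<gamma> r P \<pi> (qpi \<gamma> r P \<pi>) = qpi \<gamma> r P \<pi>"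
proof -
  have "q = q'" if "Tpol \<gamma> r P \<pi> q = q" "Tpol \<gamma> r P \<pi> q' = q'" for q q'
    using Tpol_comparison[OF P \<pi> \<gamma>, of q r q'] Tpol_comparison[OF P \<pi> \<gamma>, of q' r q] that
    by (intro ext antisym) auto
  with Tpol_has_fixed_point[OF P \<pi> \<gamma>] have "\<exists>!q. Tpol \<gamma> r P \<pi> q = q" by blast
  thus ?thesis unfolding qpi_def by (rule theI')
qed

lemma qpi_le_if_Tpol_le:
  fixes P :: "'x::finite \<Rightarrow> 'a::finite \<Rightarrow> 'x \<Rightarrow> real"
  assumes P: "stoch_kernel P" and \<pi>: "stoch_policy \<pi>" and \<gamma>: "0 \<le> \<gamma>" "\<gamma> < 1"
    and "\<And>x a. Tpol \<gamma> r P \<pi> q x a \<le> q x a"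
  shows "qpi \<gamma> r P \<pi> x a \<le> q x a"
  using Tpol_comparison[OF P \<pi> \<gamma>] Tpol_qpi[OF P \<pi> \<gamma>] assms(5) by (metis order.refl)

lemma le_qpi_if_le_Tpol:
  fixes P :: "'x::finite \<Rightarrow> 'a::finite \<Rightarrow> 'x \<Rightarrow> real"
  assumes P: "stoch_kernel P" and \<pi>: "stoch_policy \<pi>" and \<gamma>: "0 \<le> \<gamma>" "\<gamma> < 1"
    and "\<And>x a. q x a \<le> Tpol \<gamma> r P \<pi> q x a"
  shows "q x a \<le> qpi \<gamma> r P \<pi> x a"
  using Tpol_comparison[OF P \<pi> \<gamma>] Tpol_qpi[OF P \<pi> \<gamma>] assms(5) by (metis order.refl)

lemma optimal_policy_stoch: "optimal_policy \<gamma> r P \<pi>s \<Longrightarrow> stoch_policy \<pi>s"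
  by (simp add: optimal_policy_def)

locale discounted_mdp =
  fixes \<gamma> :: real and r :: "'x::finite \<Rightarrow> 'a::finite \<Rightarrow> real" and P :: "'x \<Rightarrow> 'a \<Rightarrow> 'x \<Rightarrow> real"
  assumes discount: "0 \<le> \<gamma>" "\<gamma> < 1"
    and reward_bounded: "\<And>x a. \<bar>r x a\<bar> \<le> 1"
    and kernel: "stoch_kernel P"
begin

abbreviation H where "H \<equiv> Hor \<gamma>"

lemma one_plus_discounted_Hor: "1 + \<gamma> * H = H"
  using discount by (simp add: Hor_def field_simps)

lemma qpi_eq: "stoch_policy \<pi> \<Longrightarrow> qpi \<gamma> r P \<pi> x a = r x a + \<gamma> * kern_app P (vpi \<gamma> r P \<pi>) x a"
  using Tpol_qpi[OF kernel _ discount, of \<pi> r]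
  by (metis Tpol_def Ppol_def vpi_def)

lemma abs_Tpol_le_Hor:
  assumes "stoch_policy \<pi>" and "\<And>x a. \<bar>q x a\<bar> \<le> H"
  shows "\<bar>Tpol \<gamma> r P \<pi> q x a\<bar> \<le> H"
proof -
  have "\<bar>\<gamma> * Ppol P \<pi> q x a\<bar> \<le> \<gamma> * H"
    using abs_Ppol_le[OF kernel assms] discount(1) by (simp add: abs_mult mult_left_mono)
  thus ?thesis
    using reward_bounded[of x a] one_plus_discounted_Hor by (simp add: Tpol_def abs_le_iff)
qed

text \<open>The constants H and -H are a super- and a subsolution of the Bellman equation.\<close>

lemma abs_qpi_le_Hor:
  assumes \<pi>: "stoch_policy \<pi>"
  shows "\<bar>qpi \<gamma> r P \<pi> x a\<bar> \<le> H"
proof -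
  have "Tpol \<gamma> r P \<pi> (\<lambda>x a. H) x a \<le> H" "- H \<le> Tpol \<gamma> r P \<pi> (\<lambda>x a. - H) x a" for x a
    using reward_bounded[of x a] one_plus_discounted_Hor
    by (simp_all add: Tpol_def Ppol_const[OF kernel \<pi>] abs_le_iff)
  hence "qpi \<gamma> r P \<pi> x a \<le> H" "- H \<le> qpi \<gamma> r P \<pi> x a"
    using qpi_le_if_Tpol_le[OF kernel \<pi> discount, of r "\<lambda>x a. H"]
      le_qpi_if_le_Tpol[OF kernel \<pi> discount, of "\<lambda>x a. - H" r] by simp_all
  thus ?thesis by simp
qed

lemma abs_vpi_le_Hor: "stoch_policy \<pi> \<Longrightarrow> \<bar>vpi \<gamma> r P \<pi> x\<bar> \<le> H"
  unfolding vpi_def by (intro abs_pol_app_le abs_qpi_le_Hor)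

lemma ex_greedy_selector:
  fixes q :: "'x \<Rightarrow> 'a \<Rightarrow> real"
  shows "\<exists>g. \<forall>x a. q x a \<le> q x (g x)"
proof -
  have "\<exists>b. \<forall>a. q x a \<le> q x b" for x
    using Max_in[of "range (q x)"] Max_ge[of "range (q x)"] by fastforce
  thus ?thesis by metis
qed

text \<open>For the policy g that is greedy for q^*: q^* \<le> T^g q^*, hence q^* \<le> q^g, and
  v^g \<le> v^* by optimality.\<close>

lemma qpi_le_vpi_if_optimal:
  assumes opt: "optimal_policy \<gamma> r P \<pi>s"
  shows "qpi \<gamma> r P \<pi>s x a \<le> vpi \<gamma> r P \<pi>s x"
proof -
  let ?qs = "qpi \<gamma> r P \<pi>s" and ?vs = "vpi \<gamma> r P \<pi>s"
  have \<pi>s: "stoch_policy \<pi>s" using opt by (rule optimal_policy_stoch)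
  obtain g where g: "\<And>x a. ?qs x a \<le> ?qs x (g x)" using ex_greedy_selector by blast
  have g_pol: "stoch_policy (det_pol g)" by (rule stoch_policy_det_pol)
  have "?vs y \<le> ?qs y (g y)" for y
    unfolding vpi_def using \<pi>s g by (rule pol_app_le)
  hence "?qs x a \<le> Tpol \<gamma> r P (det_pol g) ?qs x a" for x a
    using kern_app_mono[OF kernel] discount(1)
    by (simp add: qpi_eq[OF \<pi>s] Tpol_def Ppol_def pol_app_det_pol mult_left_mono)
  hence "?qs x (g x) \<le> qpi \<gamma> r P (det_pol g) x (g x)"
    by (rule le_qpi_if_le_Tpol[OF kernel g_pol discount])
  also have "\<dots> = vpi \<gamma> r P (det_pol g) x"
    by (simp add: vpi_def pol_app_det_pol)
  also have "\<dots> \<le> ?vs x"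
    using opt g_pol by (simp add: optimal_policy_def)
  finally show ?thesis using g[of x a] by linarith
qed

lemma Ppol_qpi_le_if_optimal:
  assumes "optimal_policy \<gamma> r P \<pi>s" and "stoch_policy \<pi>"
  shows "Ppol P \<pi> (qpi \<gamma> r P \<pi>s) x a \<le> kern_app P (vpi \<gamma> r P \<pi>s) x a"
  unfolding Ppol_def
  by (intro kern_app_mono[OF kernel] pol_app_le assms qpi_le_vpi_if_optimal)

text \<open>Tchain re-indexed so that the recursion starts at k = 0: since q^{\<pi>_0} is a fixed point
  of T^{\<pi>_0}, nonstat_q pol k = T^{\<pi>_{k-1}} ... T^{\<pi>_0} q^{\<pi>_0} (see v_nonstat_eq).\<close>

primrec nonstat_q :: "(nat \<Rightarrow> 'x \<Rightarrow> 'a) \<Rightarrow> nat \<Rightarrow> 'x \<Rightarrow> 'a \<Rightarrow> real" where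
  "nonstat_q pol 0 = qpi \<gamma> r P (det_pol (pol 0))"
| "nonstat_q pol (Suc k) = Tpol \<gamma> r P (det_pol (pol k)) (nonstat_q pol k)"

lemma Tchain_eq_nonstat_q:
  "Tchain \<gamma> r P pol k (qpi \<gamma> r P (det_pol (pol 0))) = nonstat_q pol (Suc k)"
  by (induction k) (simp_all add: Tpol_qpi[OF kernel stoch_policy_det_pol discount])

lemma v_nonstat_eq: "1 \<le> k \<Longrightarrow> v_nonstat \<gamma> r P pol k x = nonstat_q pol k x (pol k x)"
  by (cases k) (simp_all add: v_nonstat_def pol_app_det_pol Tchain_eq_nonstat_q)

lemma abs_nonstat_q_le_Hor: "\<bar>nonstat_q pol k x a\<bar> \<le> H"
  by (induction k arbitrary: x a)
    (simp_all add: abs_qpi_le_Hor abs_Tpol_le_Hor stoch_policy_det_pol)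

lemma nonstat_q_le_qpi_if_optimal:
  assumes opt: "optimal_policy \<gamma> r P \<pi>s"
  shows "nonstat_q pol k x a \<le> qpi \<gamma> r P \<pi>s x a"
proof (induction k arbitrary: x a)
  case 0
  have "Tpol \<gamma> r P (det_pol (pol 0)) (qpi \<gamma> r P \<pi>s) x a \<le> qpi \<gamma> r P \<pi>s x a" for x a
    unfolding Tpol_def qpi_eq[OF optimal_policy_stoch[OF opt], of x a]
    using mult_left_mono[OF Ppol_qpi_le_if_optimal[OF opt stoch_policy_det_pol] discount(1)]
    by simp
  thus ?case unfolding nonstat_q.simps
    by (rule qpi_le_if_Tpol_le[OF kernel stoch_policy_det_pol discount])
next
  case (Suc k)
  have "Ppol P (det_pol (pol k)) (nonstat_q pol k) x a \<le> kern_app P (vpi \<gamma> r P \<pi>s) x a"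
    using Ppol_mono[OF kernel stoch_policy_det_pol Suc.IH]
      Ppol_qpi_le_if_optimal[OF opt stoch_policy_det_pol] by (rule order_trans)
  thus ?case
    using discount(1) by (simp add: Tpol_def qpi_eq[OF optimal_policy_stoch[OF opt]] mult_left_mono)
qed

lemma v_nonstat_le_vpi_if_optimal:
  "optimal_policy \<gamma> r P \<pi>s \<Longrightarrow> 1 \<le> k \<Longrightarrow> v_nonstat \<gamma> r P pol k x \<le> vpi \<gamma> r P \<pi>s x"
  using v_nonstat_eq nonstat_q_le_qpi_if_optimal qpi_le_vpi_if_optimal order_trans by metis

end

section \<open>Mirror descent value iteration\<close>

lemma A_gamma_Suc: "A_gamma \<gamma> \<alpha> (Suc k) = \<gamma> * A_gamma \<gamma> \<alpha> k + \<gamma> * \<alpha> ^ k"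
proof -
  have "A_gamma \<gamma> \<alpha> (Suc k) = (\<Sum>j<k. \<gamma> ^ (Suc k - j) * \<alpha> ^ j) + \<gamma> * \<alpha> ^ k"
    unfolding A_gamma_def by simp
  also have "(\<Sum>j<k. \<gamma> ^ (Suc k - j) * \<alpha> ^ j) = \<gamma> * A_gamma \<gamma> \<alpha> k"
    unfolding A_gamma_def sum_distrib_left by (rule sum.cong) (auto simp: Suc_diff_le)
  finally show ?thesis .
qed

lemma Gamma_bound_eq:
  "Gamma_bound \<alpha> M \<gamma> r P y pol \<pi>s k x =
     (1 - \<alpha>) * ((\<Sum>j<k. \<gamma> ^ j * Pchain P pol (k - j) j (mdvi_E \<alpha> M \<gamma> r P y (k - j)) x (pol k x))
                - (\<Sum>j<k. \<gamma> ^ j * pol_app \<pi>s (Pstar_pow P \<pi>s j (mdvi_E \<alpha> M \<gamma> r P y (k - j))) x))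
   + 2 * Hor \<gamma> * (\<alpha> ^ k + (1 - \<alpha>) * A_gamma \<gamma> \<alpha> k)"
proof -
  have "Pji P pol (k - j) (k - 1) = Pchain P pol (k - j) j" if "j < k" for j
    using that by (simp add: Pji_def)
  then show ?thesis
    unfolding Gamma_bound_def A_inf_def
    by (simp add: pol_app_det_pol right_diff_distrib sum_subtractf mult.commute)
qed

locale mdvi = discounted_mdp \<gamma> r P
  for \<gamma> :: real and r :: "'x::finite \<Rightarrow> 'a::finite \<Rightarrow> real" and P +
  fixes \<alpha> :: real and M :: nat and y :: "nat \<Rightarrow> nat \<Rightarrow> 'x \<Rightarrow> 'a \<Rightarrow> 'x"
  assumes alpha: "0 \<le> \<alpha>" "\<alpha> < 1"
begin

declare mdvi_state.simps(2) [simp del]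

abbreviation s where "s \<equiv> mdvi_s \<alpha> M \<gamma> r y"
abbreviation w where "w k \<equiv> fst (snd (mdvi_state \<alpha> M \<gamma> r y k))"
abbreviation w_prev where "w_prev k \<equiv> snd (snd (mdvi_state \<alpha> M \<gamma> r y k))"
abbreviation E where "E \<equiv> mdvi_E \<alpha> M \<gamma> r P y"

definition A :: "nat \<Rightarrow> real" where "A k = (\<Sum>j<k. \<alpha> ^ j)"

lemma A_0: "A 0 = 0"
  by (simp add: A_def)

lemma A_Suc: "A (Suc k) = A k + \<alpha> ^ k"
  by (simp add: A_def)

lemma A_Suc_shift: "A (Suc k) = 1 + \<alpha> * A k"
  unfolding A_def by (subst sum.lessThan_Suc_shift) (simp add: sum_distrib_left)

lemma one_minus_alpha_mult_A: "(1 - \<alpha>) * A k = 1 - \<alpha> ^ k"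
  unfolding A_def by (simp add: one_diff_power_eq)

lemma mdvi_state_0: "s 0 x a = 0" "w 0 x = 0" "w_prev 0 x = 0"
  by (simp_all add: mdvi_s_def)

lemma mdvi_state_Suc:
  "s (Suc k) x a = r x a + \<gamma> * Phat M y k (mdvi_v \<alpha> M \<gamma> r y k) x a + \<alpha> * s k x a"
  "w (Suc k) x = Max (range (s (Suc k) x))"
  "w_prev (Suc k) = w k"
  by (cases "mdvi_state \<alpha> M \<gamma> r y k";
      simp add: mdvi_state.simps(2) mdvi_s_def mdvi_v_def Phat_def Let_def)+

lemma s_Suc:
  "s (Suc k) x a = r x a + \<gamma> * kern_app P (\<lambda>x. w k x - \<alpha> * w_prev k x) x a
     + mdvi_eps \<alpha> M \<gamma> r P y (Suc k) x a + \<alpha> * s k x a"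
  by (simp add: mdvi_state_Suc(1) mdvi_eps_def mdvi_v_def)

lemma E_Suc: "E (Suc k) x a = mdvi_eps \<alpha> M \<gamma> r P y (Suc k) x a + \<alpha> * E k x a"
proof -
  have "E (Suc k) x a = (\<Sum>j\<in>insert (Suc k) {1..k}. \<alpha> ^ (Suc k - j) * mdvi_eps \<alpha> M \<gamma> r P y j x a)"
    unfolding mdvi_E_def by (simp add: atLeastAtMostSuc_conv)
  also have "\<dots> = mdvi_eps \<alpha> M \<gamma> r P y (Suc k) x a
      + (\<Sum>j\<in>{1..k}. \<alpha> * (\<alpha> ^ (k - j) * mdvi_eps \<alpha> M \<gamma> r P y j x a))"
    by (simp add: Suc_diff_le mult.assoc)
  finally show ?thesis
    unfolding mdvi_E_def by (simp add: sum_distrib_left)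
qed

lemma s_eq: "s k x a = A k * r x a + \<gamma> * kern_app P (w_prev k) x a + E k x a"
proof (induction k arbitrary: x a)
  case 0
  show ?case by (simp add: mdvi_state_0 A_0 mdvi_E_def kern_app_def)
next
  case (Suc k)
  have "s (Suc k) x a = r x a + \<gamma> * kern_app P (\<lambda>x. w k x - \<alpha> * w_prev k x) x a
      + mdvi_eps \<alpha> M \<gamma> r P y (Suc k) x a + \<alpha> * (A k * r x a + \<gamma> * kern_app P (w_prev k) x a + E k x a)"
    by (simp add: s_Suc Suc.IH)
  also have "\<dots> = (1 + \<alpha> * A k) * r x a + \<gamma> * kern_app P (w k) x a
      + (mdvi_eps \<alpha> M \<gamma> r P y (Suc k) x a + \<alpha> * E k x a)"
    by (simp add: kern_app_diff kern_app_mult algebra_simps)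
  finally show ?case
    by (simp add: mdvi_state_Suc(3) E_Suc A_Suc_shift)
qed

lemma s_le_w: "s k x a \<le> w k x"
  by (cases k) (simp_all add: mdvi_state_0 mdvi_state_Suc(2))

lemma pol_app_s_le_w: "stoch_policy \<pi> \<Longrightarrow> pol_app \<pi> (s k) x \<le> w k x"
  by (rule pol_app_le) (simp_all add: s_le_w)

lemma w_eq_if_greedy: "s k x (d x) = Max (range (s k x)) \<Longrightarrow> w k x = s k x (d x)"
  by (cases k) (simp_all add: mdvi_state_0 mdvi_state_Suc(2))

lemma A_qpi_minus_s_Suc:
  assumes "stoch_policy \<pi>"
  shows "A (Suc k) * qpi \<gamma> r P \<pi> x a - s (Suc k) x a
    = \<gamma> * (A k * kern_app P (vpi \<gamma> r P \<pi>) x a + \<alpha> ^ k * kern_app P (vpi \<gamma> r P \<pi>) x a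
        - kern_app P (w k) x a) - E (Suc k) x a"
  by (simp add: s_eq[of "Suc k"] mdvi_state_Suc(3) qpi_eq[OF assms] A_Suc algebra_simps)

lemma s_Suc_minus_A_nonstat_q:
  assumes "w k = pol_app (det_pol (pol k)) (s k)"
  shows "s (Suc k) x a - A (Suc k) * nonstat_q pol (Suc k) x a
    = \<gamma> * (Ppol P (det_pol (pol k)) (\<lambda>x a. s k x a - A k * nonstat_q pol k x a) x a
        - \<alpha> ^ k * Ppol P (det_pol (pol k)) (nonstat_q pol k) x a) + E (Suc k) x a"
  by (simp add: s_eq[of "Suc k"] mdvi_state_Suc(3) assms Ppol_def[symmetric] A_Suc Tpol_def
      Ppol_diff Ppol_mult algebra_simps)

lemma A_qpi_minus_s_le:
  assumes \<pi>: "stoch_policy \<pi>"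
  shows "A k * qpi \<gamma> r P \<pi> x a - s k x a
    \<le> A_gamma \<gamma> \<alpha> k * H - (\<Sum>j<k. \<gamma> ^ j * Pstar_pow P \<pi> j (E (k - j)) x a)"
proof (induction k arbitrary: x a)
  case 0
  show ?case by (simp add: A_0 A_gamma_def mdvi_state_0)
next
  case (Suc k)
  let ?q = "qpi \<gamma> r P \<pi>" and ?v = "vpi \<gamma> r P \<pi>"
  define B where "B = (\<lambda>x a. A_gamma \<gamma> \<alpha> k * H - (\<Sum>j<k. \<gamma> ^ j * Pstar_pow P \<pi> j (E (k - j)) x a))"
  have "A k * kern_app P ?v x a - kern_app P (pol_app \<pi> (s k)) x a
      = Ppol P \<pi> (\<lambda>x a. A k * ?q x a - s k x a) x a"
    by (simp add: Ppol_diff Ppol_mult) (simp add: Ppol_def vpi_def)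
  also have "\<dots> \<le> Ppol P \<pi> B x a"
    by (rule Ppol_mono[OF kernel \<pi>]) (simp add: B_def Suc.IH)
  also have "\<dots> = A_gamma \<gamma> \<alpha> k * H - (\<Sum>j<k. \<gamma> ^ j * Pstar_pow P \<pi> (Suc j) (E (k - j)) x a)"
    by (simp add: B_def Ppol_diff Ppol_const[OF kernel \<pi>] Ppol_sum Ppol_mult Pstar_pow_def)
  finally have IH: "A k * kern_app P ?v x a - kern_app P (pol_app \<pi> (s k)) x a
      \<le> A_gamma \<gamma> \<alpha> k * H - (\<Sum>j<k. \<gamma> ^ j * Pstar_pow P \<pi> (Suc j) (E (k - j)) x a)" .
  have greedy_gain: "kern_app P (pol_app \<pi> (s k)) x a \<le> kern_app P (w k) x a"
    by (rule kern_app_mono[OF kernel]) (rule pol_app_s_le_w[OF \<pi>])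
  have "\<alpha> ^ k * kern_app P ?v x a \<le> \<alpha> ^ k * H"
    using abs_kern_app_le[OF kernel abs_vpi_le_Hor[OF \<pi>]] alpha(1)
    by (simp add: abs_le_iff mult_left_mono)
  with IH greedy_gain have "A k * kern_app P ?v x a + \<alpha> ^ k * kern_app P ?v x a - kern_app P (w k) x a
      \<le> A_gamma \<gamma> \<alpha> k * H - (\<Sum>j<k. \<gamma> ^ j * Pstar_pow P \<pi> (Suc j) (E (k - j)) x a) + \<alpha> ^ k * H"
    by linarith
  from mult_left_mono[OF this discount(1)]
  have "A (Suc k) * ?q x a - s (Suc k) x a
      \<le> \<gamma> * (A_gamma \<gamma> \<alpha> k * H - (\<Sum>j<k. \<gamma> ^ j * Pstar_pow P \<pi> (Suc j) (E (k - j)) x a) + \<alpha> ^ k * H)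
        - E (Suc k) x a"
    unfolding A_qpi_minus_s_Suc[OF \<pi>] by linarith
  also have "\<dots> = A_gamma \<gamma> \<alpha> (Suc k) * H - (\<Sum>j<Suc k. \<gamma> ^ j * Pstar_pow P \<pi> j (E (Suc k - j)) x a)"
    unfolding A_gamma_Suc sum.lessThan_Suc_shift[of _ k]
    by (simp add: sum_distrib_left algebra_simps Pstar_pow_def)
  finally show ?case .
qed

lemma s_minus_A_nonstat_q_le:
  assumes "\<forall>j<k. \<forall>x. s j x (pol j x) = Max (range (s j x))"
  shows "s k x a - A k * nonstat_q pol k x a
    \<le> (\<Sum>j<k. \<gamma> ^ j * Pchain P pol (k - j) j (E (k - j)) x a) + A_gamma \<gamma> \<alpha> k * H"
  using assms
proof (induction k arbitrary: x a)
  case 0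
  show ?case by (simp add: A_0 A_gamma_def mdvi_state_0)
next
  case (Suc k)
  let ?\<pi> = "det_pol (pol k)" and ?Q = "nonstat_q pol k"
  have \<pi>: "stoch_policy ?\<pi>" by (rule stoch_policy_det_pol)
  define B where
    "B = (\<lambda>x a. (\<Sum>j<k. \<gamma> ^ j * Pchain P pol (k - j) j (E (k - j)) x a) + A_gamma \<gamma> \<alpha> k * H)"
  have "w k x = s k x (pol k x)" for x
    by (rule w_eq_if_greedy) (use Suc.prems in auto)
  hence w_greedy: "w k = pol_app ?\<pi> (s k)"
    by (simp add: fun_eq_iff pol_app_det_pol)
  have "Ppol P ?\<pi> (\<lambda>x a. s k x a - A k * ?Q x a) x a \<le> Ppol P ?\<pi> B x a"
    by (rule Ppol_mono[OF kernel \<pi>]) (use Suc in \<open>simp add: B_def\<close>)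
  also have "\<dots> = (\<Sum>j<k. \<gamma> ^ j * Pchain P pol (k - j) (Suc j) (E (k - j)) x a) + A_gamma \<gamma> \<alpha> k * H"
    by (simp add: B_def Ppol_add Ppol_const[OF kernel \<pi>] Ppol_sum Ppol_mult)
  finally have IH: "Ppol P ?\<pi> (\<lambda>x a. s k x a - A k * ?Q x a) x a
      \<le> (\<Sum>j<k. \<gamma> ^ j * Pchain P pol (k - j) (Suc j) (E (k - j)) x a) + A_gamma \<gamma> \<alpha> k * H" .
  have "\<bar>Ppol P ?\<pi> ?Q x a\<bar> \<le> H"
    by (rule abs_Ppol_le[OF kernel \<pi> abs_nonstat_q_le_Hor])
  hence "- Ppol P ?\<pi> ?Q x a \<le> H" by simp
  from mult_left_mono[OF this zero_le_power[OF alpha(1)]]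
  have "- (\<alpha> ^ k * Ppol P ?\<pi> ?Q x a) \<le> \<alpha> ^ k * H" by simp
  with IH have "Ppol P ?\<pi> (\<lambda>x a. s k x a - A k * ?Q x a) x a - \<alpha> ^ k * Ppol P ?\<pi> ?Q x a
      \<le> (\<Sum>j<k. \<gamma> ^ j * Pchain P pol (k - j) (Suc j) (E (k - j)) x a) + A_gamma \<gamma> \<alpha> k * H + \<alpha> ^ k * H"
    by linarith
  from mult_left_mono[OF this discount(1)]
  have "s (Suc k) x a - A (Suc k) * nonstat_q pol (Suc k) x a
      \<le> \<gamma> * ((\<Sum>j<k. \<gamma> ^ j * Pchain P pol (k - j) (Suc j) (E (k - j)) x a) + A_gamma \<gamma> \<alpha> k * H
        + \<alpha> ^ k * H) + E (Suc k) x a"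
    unfolding s_Suc_minus_A_nonstat_q[where k = k and pol = pol, OF w_greedy] by linarith
  also have "\<dots> = (\<Sum>j<Suc k. \<gamma> ^ j * Pchain P pol (Suc k - j) j (E (Suc k - j)) x a)
      + A_gamma \<gamma> \<alpha> (Suc k) * H"
    unfolding A_gamma_Suc sum.lessThan_Suc_shift[of _ k]
    by (simp add: sum_distrib_left algebra_simps)
  finally show ?case .
qed

lemma A_mult_vpi_minus_nonstat_q_le:
  assumes opt: "optimal_policy \<gamma> r P \<pi>s"
    and greedy: "\<forall>j\<le>k. \<forall>x. s j x (pol j x) = Max (range (s j x))"
  shows "A k * (vpi \<gamma> r P \<pi>s x - nonstat_q pol k x (pol k x))
    \<le> 2 * A_gamma \<gamma> \<alpha> k * H
      + (\<Sum>j<k. \<gamma> ^ j * Pchain P pol (k - j) j (E (k - j)) x (pol k x))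
      - (\<Sum>j<k. \<gamma> ^ j * pol_app \<pi>s (Pstar_pow P \<pi>s j (E (k - j))) x)"
proof -
  have \<pi>s: "stoch_policy \<pi>s" using opt by (rule optimal_policy_stoch)
  have w_greedy: "w k x = s k x (pol k x)"
    by (rule w_eq_if_greedy) (use greedy in auto)
  have "A k * vpi \<gamma> r P \<pi>s x - pol_app \<pi>s (s k) x
      = pol_app \<pi>s (\<lambda>x a. A k * qpi \<gamma> r P \<pi>s x a - s k x a) x"
    by (simp add: pol_app_diff pol_app_mult vpi_def)
  also have "\<dots> \<le> pol_app \<pi>s (\<lambda>x a. A_gamma \<gamma> \<alpha> k * H
      - (\<Sum>j<k. \<gamma> ^ j * Pstar_pow P \<pi>s j (E (k - j)) x a)) x"
    by (rule pol_app_mono[OF \<pi>s]) (rule A_qpi_minus_s_le[OF \<pi>s])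
  also have "\<dots> = A_gamma \<gamma> \<alpha> k * H - (\<Sum>j<k. \<gamma> ^ j * pol_app \<pi>s (Pstar_pow P \<pi>s j (E (k - j))) x)"
    by (simp add: pol_app_diff pol_app_const[OF \<pi>s] pol_app_sum pol_app_mult)
  finally have upper: "A k * vpi \<gamma> r P \<pi>s x - w k x
      \<le> A_gamma \<gamma> \<alpha> k * H - (\<Sum>j<k. \<gamma> ^ j * pol_app \<pi>s (Pstar_pow P \<pi>s j (E (k - j))) x)"
    using pol_app_s_le_w[OF \<pi>s, of k x] by linarith
  have lower: "w k x - A k * nonstat_q pol k x (pol k x)
      \<le> (\<Sum>j<k. \<gamma> ^ j * Pchain P pol (k - j) j (E (k - j)) x (pol k x)) + A_gamma \<gamma> \<alpha> k * H"
    unfolding w_greedy using greedy by (intro s_minus_A_nonstat_q_le) auto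
  from upper lower show ?thesis
    by (simp add: algebra_simps)
qed

text \<open>Since 1 = \<alpha>^k + (1 - \<alpha>) A_k, the gap splits into a part bounded crudely by 2 H and
  a part controlled by the previous lemma.\<close>

lemma vpi_minus_v_nonstat_le_Gamma_bound:
  assumes opt: "optimal_policy \<gamma> r P \<pi>s"
    and greedy: "\<forall>j\<le>k. \<forall>x. s j x (pol j x) = Max (range (s j x))"
    and k: "1 \<le> k"
  shows "vpi \<gamma> r P \<pi>s x - v_nonstat \<gamma> r P pol k x \<le> Gamma_bound \<alpha> M \<gamma> r P y pol \<pi>s k x"
proof -
  have \<pi>s: "stoch_policy \<pi>s" using opt by (rule optimal_policy_stoch)
  define D where "D = vpi \<gamma> r P \<pi>s x - nonstat_q pol k x (pol k x)"
  define X where "X = (\<Sum>j<k. \<gamma> ^ j * Pchain P pol (k - j) j (E (k - j)) x (pol k x))"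
  define Y where "Y = (\<Sum>j<k. \<gamma> ^ j * pol_app \<pi>s (Pstar_pow P \<pi>s j (E (k - j))) x)"
  have "D = \<alpha> ^ k * D + (1 - \<alpha>) * (A k * D)"
    by (simp add: one_minus_alpha_mult_A flip: mult.assoc distrib_right)
  also have "\<dots> \<le> \<alpha> ^ k * (2 * H) + (1 - \<alpha>) * (2 * A_gamma \<gamma> \<alpha> k * H + X - Y)"
  proof (rule add_mono)
    show "\<alpha> ^ k * D \<le> \<alpha> ^ k * (2 * H)"
      using abs_vpi_le_Hor[OF \<pi>s, of x] abs_nonstat_q_le_Hor[of pol k x "pol k x"] alpha(1)
      by (intro mult_left_mono) (auto simp: D_def abs_le_iff)
    show "(1 - \<alpha>) * (A k * D) \<le> (1 - \<alpha>) * (2 * A_gamma \<gamma> \<alpha> k * H + X - Y)"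
      using A_mult_vpi_minus_nonstat_q_le[OF opt greedy] alpha(2)
      by (intro mult_left_mono) (simp_all add: D_def X_def Y_def)
  qed
  also have "\<dots> = Gamma_bound \<alpha> M \<gamma> r P y pol \<pi>s k x"
    by (simp add: Gamma_bound_eq X_def Y_def algebra_simps)
  finally show ?thesis
    using k by (simp add: D_def v_nonstat_eq)
qed

end

theorem lemma1:
  fixes \<gamma> \<alpha> :: real and K M :: nat
    and r :: "'x::finite \<Rightarrow> 'a::finite \<Rightarrow> real"
    and P :: "'x \<Rightarrow> 'a \<Rightarrow> 'x \<Rightarrow> real"
    and y :: "nat \<Rightarrow> nat \<Rightarrow> 'x \<Rightarrow> 'a \<Rightarrow> 'x"
    and pol :: "nat \<Rightarrow> 'x \<Rightarrow> 'a"
    and \<pi>s :: "'x \<Rightarrow> 'a \<Rightarrow> real"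
    and k :: nat
  assumes gamma: "0 \<le> \<gamma>" "\<gamma> < 1"
    and rew: "\<forall>x a. -1 \<le> r x a \<and> r x a \<le> 1"
    and kern: "stoch_kernel P"
    and alpha: "0 \<le> \<alpha>" "\<alpha> < 1"
    and KM: "0 < K" "0 < M"
    and samples: "\<forall>j m x a. 0 < P x a (y j m x a)"
    and greedy: "\<forall>j\<le>K. \<forall>x. mdvi_s \<alpha> M \<gamma> r y j x (pol j x) = Max (range (mdvi_s \<alpha> M \<gamma> r y j x))"
    and opt: "optimal_policy \<gamma> r P \<pi>s"
    and k: "1 \<le> k" "k \<le> K"
  shows "\<forall>x. 0 \<le> vpi \<gamma> r P \<pi>s x - v_nonstat \<gamma> r P pol k x
           \<and> vpi \<gamma> r P \<pi>s x - v_nonstat \<gamma> r P pol k x \<le> Gamma_bound \<alpha> M \<gamma> r P y pol \<pi>s k x"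
proof -
  interpret mdvi \<gamma> r P \<alpha> M y
    using gamma rew kern alpha by unfold_locales (auto simp: abs_le_iff)
  have "\<forall>j\<le>k. \<forall>x. s j x (pol j x) = Max (range (s j x))"
    using greedy k(2) by auto
  thus ?thesis
    using v_nonstat_le_vpi_if_optimal[OF opt k(1)] vpi_minus_v_nonstat_le_Gamma_bound[OF opt _ k(1)]
    by auto
qed

end
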